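(* Let $G$ be a directed po-group satisfying RDP (respectively RDP$_1$). Then the pseudo effect algebra $\Gamma(\mathbb Z \overrightarrow{\times} G,(1,0))$ satisfies RDP (respectively RDP$_1$).
   Context: A po-group is a (not necessarily Abelian, additively written) group with a partial order $\le$ such that $a\le b$ implies $x+a+y\le x+b+y$; $G^+$ is its positive cone; $G$ is directed if any two elements have a common upper bound. $\mathbb Z \overrightarrow{\times} G$ is the group $\mathbb Z\times G$ (componentwise operation) with the lexicographic order: $(m,g)\le(n,h)$ iff $m<n$, or $m=n$ and $g\le h$. For a po-group $H$ and $u\in H^+$ a strong unit (for each $h\in H$ there is $k\ge1$ with $h\le ku$), $\Gamma(H,u)=\{h\in H:0\le h\le u\}$ is a pseudo effect algebra with constants $0,u$ and partial addition: $a+b$ is defined (and equals the group sum) iff $a+b\le u$. $(1,0)$ is a strong unit of $\mathbb Z \overrightarrow{\times} G$. RDP for a po-group $G$: for all $a_1,a_2,b_1,b_2\in G^+$ with $a_1+a_2=b_1+b_2$ there are $c_{11},c_{12},c_{21},c_{22}\in G^+$ with $a_1=c_{11}+c_{12}$, $a_2=c_{21}+c_{22}$, $b_1=c_{11}+c_{21}$, $b_2=c_{12}+c_{22}$; RDP$_1$ additionally requires that $0\le x\le c_{12}$, $0\le y\le c_{21}$ imply $x+y=y+x$. RDP and RDP$_1$ for a pseudo effect algebra $E$ are defined identically, with $G^+$ replaced by $E$ and all sums required to be defined in $E$. *)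

theory Defs
  imports Main "HOL-Library.Product_Plus"
begin

definition po_group :: "('a::group_add \<Rightarrow> 'a \<Rightarrow> bool) \<Rightarrow> bool" where
  "po_group le \<longleftrightarrow>
     (\<forall>a. le a a) \<and> (\<forall>a b c. le a b \<longrightarrow> le b c \<longrightarrow> le a c) \<and>
     (\<forall>a b. le a b \<longrightarrow> le b a \<longrightarrow> a = b) \<and>
     (\<forall>a b x y. le a b \<longrightarrow> le (x + a + y) (x + b + y))"

definition directed :: "('a \<Rightarrow> 'a \<Rightarrow> bool) \<Rightarrow> bool" where
  "directed le \<longleftrightarrow> (\<forall>a b. \<exists>c. le a c \<and> le b c)"

definition RDP_grp :: "('a::group_add \<Rightarrow> 'a \<Rightarrow> bool) \<Rightarrow> bool" where
  "RDP_grp le \<longleftrightarrow> (\<forall>a1 a2 b1 b2. le 0 a1 \<longrightarrow> le 0 a2 \<longrightarrow> le 0 b1 \<longrightarrow> le 0 b2 \<longrightarrow>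
      a1 + a2 = b1 + b2 \<longrightarrow>
      (\<exists>c11 c12 c21 c22. le 0 c11 \<and> le 0 c12 \<and> le 0 c21 \<and> le 0 c22 \<and>
         a1 = c11 + c12 \<and> a2 = c21 + c22 \<and> b1 = c11 + c21 \<and> b2 = c12 + c22))"

definition RDP1_grp :: "('a::group_add \<Rightarrow> 'a \<Rightarrow> bool) \<Rightarrow> bool" where
  "RDP1_grp le \<longleftrightarrow> (\<forall>a1 a2 b1 b2. le 0 a1 \<longrightarrow> le 0 a2 \<longrightarrow> le 0 b1 \<longrightarrow> le 0 b2 \<longrightarrow>
      a1 + a2 = b1 + b2 \<longrightarrow>
      (\<exists>c11 c12 c21 c22. le 0 c11 \<and> le 0 c12 \<and> le 0 c21 \<and> le 0 c22 \<and>
         a1 = c11 + c12 \<and> a2 = c21 + c22 \<and> b1 = c11 + c21 \<and> b2 = c12 + c22 \<and>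
         (\<forall>x y. le 0 x \<longrightarrow> le x c12 \<longrightarrow> le 0 y \<longrightarrow> le y c21 \<longrightarrow> x + y = y + x)))"

text \<open>Lexicographic order on Z x G (the group Z x G with componentwise operation
is the product group from Product_Plus).\<close>
definition lex_le :: "('a \<Rightarrow> 'a \<Rightarrow> bool) \<Rightarrow> int \<times> 'a \<Rightarrow> int \<times> 'a \<Rightarrow> bool" where
  "lex_le le p q \<longleftrightarrow> fst p < fst q \<or> (fst p = fst q \<and> le (snd p) (snd q))"

definition gamma_carrier :: "('b::group_add \<Rightarrow> 'b \<Rightarrow> bool) \<Rightarrow> 'b \<Rightarrow> 'b set" where
  "gamma_carrier le u = {h. le 0 h \<and> le h u}"

definition gamma_add :: "('b::group_add \<Rightarrow> 'b \<Rightarrow> bool) \<Rightarrow> 'b \<Rightarrow> 'b \<Rightarrow> 'b \<Rightarrow> 'b option" where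
  "gamma_add le u a b = (if le (a + b) u then Some (a + b) else None)"

definition pea_le :: "'b set \<Rightarrow> ('b \<Rightarrow> 'b \<Rightarrow> 'b option) \<Rightarrow> 'b \<Rightarrow> 'b \<Rightarrow> bool" where
  "pea_le E padd x z \<longleftrightarrow> (\<exists>c\<in>E. padd x c = Some z)"

definition RDP_pea :: "'b set \<Rightarrow> ('b \<Rightarrow> 'b \<Rightarrow> 'b option) \<Rightarrow> bool" where
  "RDP_pea E padd \<longleftrightarrow> (\<forall>a1\<in>E. \<forall>a2\<in>E. \<forall>b1\<in>E. \<forall>b2\<in>E. \<forall>s.
      padd a1 a2 = Some s \<longrightarrow> padd b1 b2 = Some s \<longrightarrow>
      (\<exists>c11\<in>E. \<exists>c12\<in>E. \<exists>c21\<in>E. \<exists>c22\<in>E.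
         padd c11 c12 = Some a1 \<and> padd c21 c22 = Some a2 \<and>
         padd c11 c21 = Some b1 \<and> padd c12 c22 = Some b2))"

definition RDP1_pea :: "'b set \<Rightarrow> ('b \<Rightarrow> 'b \<Rightarrow> 'b option) \<Rightarrow> bool" where
  "RDP1_pea E padd \<longleftrightarrow> (\<forall>a1\<in>E. \<forall>a2\<in>E. \<forall>b1\<in>E. \<forall>b2\<in>E. \<forall>s.
      padd a1 a2 = Some s \<longrightarrow> padd b1 b2 = Some s \<longrightarrow>
      (\<exists>c11\<in>E. \<exists>c12\<in>E. \<exists>c21\<in>E. \<exists>c22\<in>E.
         padd c11 c12 = Some a1 \<and> padd c21 c22 = Some a2 \<and>
         padd c11 c21 = Some b1 \<and> padd c12 c22 = Some b2 \<and>
         (\<forall>x\<in>E. \<forall>y\<in>E. pea_le E padd x c12 \<longrightarrow> pea_le E padd y c21 \<longrightarrow>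
            padd x y \<noteq> None \<and> padd x y = padd y x)))"

end

theory Submission
  imports Defs
begin

text \<open>The elements of Gamma(Z x_lex G, (1,0)) are the pairs (0,g) with g \<ge> 0 and
(1,g) with g \<le> 0. In an equation a1 + a2 = b1 + b2 \<le> (1,0) at most one ai and at most
one bj lie on level 1. If none does, RDP of the positive cone of G applies directly.
If ai and bi lie on level 1, directedness gives w lifting their second coordinates
into the positive cone; decompose there and subtract w again from the corner entry
cii. If ai and bj with i \<noteq> j lie on level 1, a decomposition with an off-diagonal zero
can be written down explicitly. For RDP1 the off-diagonal entries are then either zero
or both on level 0, where the interval [0,c] of Gamma is {0} x [0, snd c].\<close>

definition intervals_commute :: "('a::group_add \<Rightarrow> 'a \<Rightarrow> bool) \<Rightarrow> 'a \<Rightarrow> 'a \<Rightarrow> bool" where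
  "intervals_commute le p q \<longleftrightarrow>
     (\<forall>x y. le 0 x \<longrightarrow> le x p \<longrightarrow> le 0 y \<longrightarrow> le y q \<longrightarrow> x + y = y + x)"

definition RDP_with :: "('a::group_add \<Rightarrow> 'a \<Rightarrow> bool) \<Rightarrow> ('a \<Rightarrow> 'a \<Rightarrow> bool) \<Rightarrow> bool" where
  "RDP_with le Q \<longleftrightarrow> (\<forall>a1 a2 b1 b2. le 0 a1 \<longrightarrow> le 0 a2 \<longrightarrow> le 0 b1 \<longrightarrow> le 0 b2 \<longrightarrow>
      a1 + a2 = b1 + b2 \<longrightarrow>
      (\<exists>c11 c12 c21 c22. le 0 c11 \<and> le 0 c12 \<and> le 0 c21 \<and> le 0 c22 \<and>
         a1 = c11 + c12 \<and> a2 = c21 + c22 \<and> b1 = c11 + c21 \<and> b2 = c12 + c22 \<and> Q c12 c21))"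

lemma RDP_grp_iff_RDP_with: "RDP_grp le \<longleftrightarrow> RDP_with le (\<lambda>_ _. True)"
  by (simp add: RDP_grp_def RDP_with_def)

lemma RDP1_grp_iff_RDP_with: "RDP1_grp le \<longleftrightarrow> RDP_with le (intervals_commute le)"
  by (simp add: RDP1_grp_def RDP_with_def intervals_commute_def)

lemma RDP_withE:
  assumes "RDP_with le Q" "le 0 a1" "le 0 a2" "le 0 b1" "le 0 b2" "a1 + a2 = b1 + b2"
  obtains c11 c12 c21 c22 where "le 0 c11" "le 0 c12" "le 0 c21" "le 0 c22"
    "a1 = c11 + c12" "a2 = c21 + c22" "b1 = c11 + c21" "b2 = c12 + c22" "Q c12 c21"
  using assms unfolding RDP_with_def by blast

definition RDP_pea_with :: "'b set \<Rightarrow> ('b \<Rightarrow> 'b \<Rightarrow> 'b option) \<Rightarrow> ('b \<Rightarrow> 'b \<Rightarrow> bool) \<Rightarrow> bool" where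
  "RDP_pea_with E padd P \<longleftrightarrow> (\<forall>a1\<in>E. \<forall>a2\<in>E. \<forall>b1\<in>E. \<forall>b2\<in>E. \<forall>s.
      padd a1 a2 = Some s \<longrightarrow> padd b1 b2 = Some s \<longrightarrow>
      (\<exists>c11\<in>E. \<exists>c12\<in>E. \<exists>c21\<in>E. \<exists>c22\<in>E.
         padd c11 c12 = Some a1 \<and> padd c21 c22 = Some a2 \<and>
         padd c11 c21 = Some b1 \<and> padd c12 c22 = Some b2 \<and> P c12 c21))"

lemma RDP_pea_iff_RDP_pea_with: "RDP_pea E padd \<longleftrightarrow> RDP_pea_with E padd (\<lambda>_ _. True)"
  by (simp add: RDP_pea_def RDP_pea_with_def)

lemma RDP1_pea_iff_RDP_pea_with:
  "RDP1_pea E padd \<longleftrightarrow> RDP_pea_with E padd (\<lambda>c12 c21. \<forall>x\<in>E. \<forall>y\<in>E.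
     pea_le E padd x c12 \<longrightarrow> pea_le E padd y c21 \<longrightarrow> padd x y \<noteq> None \<and> padd x y = padd y x)"
  by (simp add: RDP1_pea_def RDP_pea_with_def)

lemma RDP_pea_with_mono:
  assumes "RDP_pea_with E padd P" "\<And>c12 c21. c12 \<in> E \<Longrightarrow> c21 \<in> E \<Longrightarrow> P c12 c21 \<Longrightarrow> P' c12 c21"
  shows "RDP_pea_with E padd P'"
  unfolding RDP_pea_with_def
proof (intro ballI allI impI)
  fix a1 a2 b1 b2 s
  assume "a1 \<in> E" "a2 \<in> E" "b1 \<in> E" "b2 \<in> E" "padd a1 a2 = Some s" "padd b1 b2 = Some s"
  from assms(1)[unfolded RDP_pea_with_def, rule_format, OF this] obtain c11 c12 c21 c22 where
    "c11 \<in> E" "c12 \<in> E" "c21 \<in> E" "c22 \<in> E" "padd c11 c12 = Some a1" "padd c21 c22 = Some a2"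
    "padd c11 c21 = Some b1" "padd c12 c22 = Some b2" "P c12 c21"
    by blast
  then show "\<exists>c11\<in>E. \<exists>c12\<in>E. \<exists>c21\<in>E. \<exists>c22\<in>E. padd c11 c12 = Some a1 \<and>
      padd c21 c22 = Some a2 \<and> padd c11 c21 = Some b1 \<and> padd c12 c22 = Some b2 \<and> P' c12 c21"
    using assms(2) by blast
qed

abbreviation lex_gamma :: "('a::group_add \<Rightarrow> 'a \<Rightarrow> bool) \<Rightarrow> (int \<times> 'a) set" where
  "lex_gamma le \<equiv> gamma_carrier (lex_le le) (1, 0)"

abbreviation lex_gamma_add ::
    "('a::group_add \<Rightarrow> 'a \<Rightarrow> bool) \<Rightarrow> int \<times> 'a \<Rightarrow> int \<times> 'a \<Rightarrow> (int \<times> 'a) option" where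
  "lex_gamma_add le \<equiv> gamma_add (lex_le le) (1, 0)"

lemma gamma_add_eq_Some_iff: "gamma_add le u a b = Some s \<longleftrightarrow> s = a + b \<and> le (a + b) u"
  by (auto simp: gamma_add_def)

lemma gamma_add_eq_SomeI: "a \<in> gamma_carrier le u \<Longrightarrow> c + d = a \<Longrightarrow> gamma_add le u c d = Some a"
  by (auto simp: gamma_carrier_def gamma_add_def)

lemma lex_gamma_iff: "(m, g) \<in> lex_gamma le \<longleftrightarrow> (m = 0 \<and> le 0 g) \<or> (m = 1 \<and> le g 0)"
  by (auto simp: gamma_carrier_def lex_le_def)

context
  fixes le :: "'a::group_add \<Rightarrow> 'a \<Rightarrow> bool"
  assumes po: "po_group le"
begin

lemma po_refl: "le a a"
  using po unfolding po_group_def by blast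

lemma po_trans: "le a b \<Longrightarrow> le b c \<Longrightarrow> le a c"
  using po unfolding po_group_def by blast

lemma po_antisym: "le a b \<Longrightarrow> le b a \<Longrightarrow> a = b"
  using po unfolding po_group_def by blast

lemma po_add_left_mono: "le a b \<Longrightarrow> le (c + a) (c + b)"
  using po unfolding po_group_def by (metis add_0_right)

lemma po_add_right_mono: "le a b \<Longrightarrow> le (a + c) (b + c)"
  using po unfolding po_group_def by (metis add_0_left)

lemma po_le_add_nonneg: "le 0 c \<Longrightarrow> le a (a + c)"
  using po_add_left_mono[of 0 c a] by simp

lemma po_le_nonneg_add: "le 0 c \<Longrightarrow> le a (c + a)"
  using po_add_right_mono[of 0 c a] by simp

lemma po_add_nonpos_le: "le c 0 \<Longrightarrow> le (a + c) a"
  using po_add_left_mono[of c 0 a] by simp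

lemma po_nonpos_add_le: "le c 0 \<Longrightarrow> le (c + a) a"
  using po_add_right_mono[of c 0 a] by simp

lemma po_neg_add_nonpos: "le a 0 \<Longrightarrow> le 0 b \<Longrightarrow> le (- b + a) 0"
  using po_trans[OF po_add_nonpos_le po_add_left_mono[of 0 b "- b"]] by simp

lemma lex_gamma_zero: "0 \<in> lex_gamma le"
  by (simp add: zero_prod_def lex_gamma_iff po_refl)

lemma RDP_with_nonpos_nonneg:
  assumes dir: "directed le" and rdp: "RDP_with le Q"
    and x1: "le x1 0" and x2: "le 0 x2" and y1: "le y1 0" and y2: "le 0 y2"
    and eq: "x1 + x2 = y1 + y2"
  obtains e11 d12 d21 d22 where "le e11 0" "le 0 d12" "le 0 d21" "le 0 d22"
    "x1 = e11 + d12" "x2 = d21 + d22" "y1 = e11 + d21" "y2 = d12 + d22" "Q d12 d21"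
proof -
  obtain w where w: "le (- x1) w" "le (- y1) w"
    using dir unfolding directed_def by blast
  have "le 0 (w + x1)" "le 0 (w + y1)"
    using po_add_right_mono[OF w(1), of x1] po_add_right_mono[OF w(2), of y1] by simp_all
  moreover have "(w + x1) + x2 = (w + y1) + y2"
    using eq by (simp add: add.assoc)
  ultimately obtain d11 d12 d21 d22 where d: "le 0 d12" "le 0 d21" "le 0 d22"
    "w + x1 = d11 + d12" "x2 = d21 + d22" "w + y1 = d11 + d21" "y2 = d12 + d22" "Q d12 d21"
    using RDP_withE[OF rdp _ x2 _ y2] by metis
  have "le d11 (w + x1)"
    using po_le_add_nonneg[OF d(1), of d11] by (simp add: d(4))
  then have "le d11 w"
    using po_add_nonpos_le[OF x1, of w] by (rule po_trans)
  then have "le (- w + d11) 0"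
    using po_add_left_mono[of d11 w "- w"] by simp
  moreover have "x1 = (- w + d11) + d12" "y1 = (- w + d11) + d21"
    using d(4,6) by (metis add.assoc minus_add_cancel)+
  ultimately show ?thesis
    using that d(1-3,5,7,8) by blast
qed

lemma RDP_with_nonneg_nonpos:
  assumes dir: "directed le" and rdp: "RDP_with le Q"
    and x1: "le 0 x1" and x2: "le x2 0" and y1: "le 0 y1" and y2: "le y2 0"
    and eq: "x1 + x2 = y1 + y2"
  obtains d11 d12 d21 e22 where "le 0 d11" "le 0 d12" "le 0 d21" "le e22 0"
    "x1 = d11 + d12" "x2 = d21 + e22" "y1 = d11 + d21" "y2 = d12 + e22" "Q d12 d21"
proof -
  obtain w where w: "le (- x2) w" "le (- y2) w"
    using dir unfolding directed_def by blast
  have "le 0 (x2 + w)" "le 0 (y2 + w)"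
    using po_add_left_mono[OF w(1), of x2] po_add_left_mono[OF w(2), of y2] by simp_all
  moreover have "x1 + (x2 + w) = y1 + (y2 + w)"
    using eq by (simp flip: add.assoc)
  ultimately obtain d11 d12 d21 d22 where d: "le 0 d11" "le 0 d12" "le 0 d21"
    "x1 = d11 + d12" "x2 + w = d21 + d22" "y1 = d11 + d21" "y2 + w = d12 + d22" "Q d12 d21"
    using RDP_withE[OF rdp x1 _ y1] by metis
  have "le d22 (x2 + w)"
    using po_le_nonneg_add[OF d(3), of d22] by (simp add: d(5))
  then have "le d22 w"
    using po_nonpos_add_le[OF x2, of w] by (rule po_trans)
  then have "le (d22 + - w) 0"
    using po_add_right_mono[of d22 w "- w"] by simp
  moreover have "x2 = d21 + (d22 + - w)" "y2 = d12 + (d22 + - w)"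
    using d(5,7) by (metis add.assoc add.right_inverse add_0_right)+
  ultimately show ?thesis
    using that d(1-4,6,8) by blast
qed

lemma lex_gamma_decomposition:
  assumes dir: "directed le" and rdp: "RDP_with le Q"
    and E: "a1 \<in> lex_gamma le" "a2 \<in> lex_gamma le" "b1 \<in> lex_gamma le" "b2 \<in> lex_gamma le"
    and eq: "a1 + a2 = b1 + b2" and bounded: "lex_le le (a1 + a2) (1, 0)"
  obtains c11 c12 c21 c22 where
    "c11 \<in> lex_gamma le" "c12 \<in> lex_gamma le" "c21 \<in> lex_gamma le" "c22 \<in> lex_gamma le"
    "c11 + c12 = a1" "c21 + c22 = a2" "c11 + c21 = b1" "c12 + c22 = b2"
    "c12 = 0 \<or> c21 = 0 \<or> (fst c12 = 0 \<and> fst c21 = 0 \<and> Q (snd c12) (snd c21))"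
proof -
  obtain m1 x1 m2 x2 n1 y1 n2 y2 where
    p: "a1 = (m1, x1)" "a2 = (m2, x2)" "b1 = (n1, y1)" "b2 = (n2, y2)"
    by (metis prod.exhaust)
  note E' = E[unfolded p lex_gamma_iff]
  have eqx: "x1 + x2 = y1 + y2"
    using eq p by simp
  have "m1 + m2 = n1 + n2" "m1 + m2 \<le> 1"
    using eq bounded p by (auto simp: lex_le_def)
  moreover have "m1 = 0 \<or> m1 = 1" "m2 = 0 \<or> m2 = 1" "n1 = 0 \<or> n1 = 1" "n2 = 0 \<or> n2 = 1"
    using E' by auto
  ultimately consider
      "m1 = 0" "m2 = 0" "n1 = 0" "n2 = 0" | "m1 = 1" "m2 = 0" "n1 = 1" "n2 = 0"
    | "m1 = 1" "m2 = 0" "n1 = 0" "n2 = 1" | "m1 = 0" "m2 = 1" "n1 = 1" "n2 = 0"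
    | "m1 = 0" "m2 = 1" "n1 = 0" "n2 = 1"
    by auto
  then show ?thesis
  proof cases
    case 1
    obtain d11 d12 d21 d22 where d: "le 0 d11" "le 0 d12" "le 0 d21" "le 0 d22"
      "x1 = d11 + d12" "x2 = d21 + d22" "y1 = d11 + d21" "y2 = d12 + d22" "Q d12 d21"
      by (rule RDP_withE[OF rdp _ _ _ _ eqx]) (use E' 1 in auto)
    show ?thesis
      by (rule that[of "(0, d11)" "(0, d12)" "(0, d21)" "(0, d22)"])
        (simp_all add: lex_gamma_iff p d 1)
  next
    case 2
    obtain e11 d12 d21 d22 where d: "le e11 0" "le 0 d12" "le 0 d21" "le 0 d22"
      "x1 = e11 + d12" "x2 = d21 + d22" "y1 = e11 + d21" "y2 = d12 + d22" "Q d12 d21"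
      by (rule RDP_with_nonpos_nonneg[OF dir rdp _ _ _ _ eqx]) (use E' 2 in auto)
    show ?thesis
      by (rule that[of "(1, e11)" "(0, d12)" "(0, d21)" "(0, d22)"])
        (simp_all add: lex_gamma_iff p d 2)
  next
    case 3
    with E' have "le (- y1 + x1) 0" "- y1 + (x1 + x2) = y2"
      by (simp_all add: po_neg_add_nonpos eqx)
    with E' 3 show ?thesis
      by (intro that[of "(0, y1)" "(1, - y1 + x1)" 0 "(0, x2)"])
        (simp_all add: lex_gamma_iff lex_gamma_zero p add.assoc)
  next
    case 4
    with E' have "le (- x1 + y1) 0" "- x1 + (y1 + y2) = x2"
      by (simp_all add: po_neg_add_nonpos flip: eqx)
    with E' 4 show ?thesis
      by (intro that[of "(0, x1)" 0 "(1, - x1 + y1)" "(0, y2)"])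
        (simp_all add: lex_gamma_iff lex_gamma_zero p add.assoc)
  next
    case 5
    obtain d11 d12 d21 e22 where d: "le 0 d11" "le 0 d12" "le 0 d21" "le e22 0"
      "x1 = d11 + d12" "x2 = d21 + e22" "y1 = d11 + d21" "y2 = d12 + e22" "Q d12 d21"
      by (rule RDP_with_nonneg_nonpos[OF dir rdp _ _ _ _ eqx]) (use E' 5 in auto)
    show ?thesis
      by (rule that[of "(0, d11)" "(0, d12)" "(0, d21)" "(1, e22)"])
        (simp_all add: lex_gamma_iff p d 5)
  qed
qed

lemma lex_gamma_RDP_pea_with:
  assumes dir: "directed le" and rdp: "RDP_with le Q"
  shows "RDP_pea_with (lex_gamma le) (lex_gamma_add le)
    (\<lambda>c12 c21. c12 = 0 \<or> c21 = 0 \<or> (fst c12 = 0 \<and> fst c21 = 0 \<and> Q (snd c12) (snd c21)))"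
  unfolding RDP_pea_with_def
proof (intro ballI allI impI)
  fix a1 a2 b1 b2 s
  assume E: "a1 \<in> lex_gamma le" "a2 \<in> lex_gamma le" "b1 \<in> lex_gamma le" "b2 \<in> lex_gamma le"
    and "lex_gamma_add le a1 a2 = Some s" "lex_gamma_add le b1 b2 = Some s"
  then have "a1 + a2 = b1 + b2" "lex_le le (a1 + a2) (1, 0)"
    by (auto simp: gamma_add_eq_Some_iff)
  then obtain c11 c12 c21 c22 where
    "c11 \<in> lex_gamma le" "c12 \<in> lex_gamma le" "c21 \<in> lex_gamma le" "c22 \<in> lex_gamma le"
    "c11 + c12 = a1" "c21 + c22 = a2" "c11 + c21 = b1" "c12 + c22 = b2"
    "c12 = 0 \<or> c21 = 0 \<or> (fst c12 = 0 \<and> fst c21 = 0 \<and> Q (snd c12) (snd c21))"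
    by (rule lex_gamma_decomposition[OF dir rdp E])
  then show "\<exists>c11\<in>lex_gamma le. \<exists>c12\<in>lex_gamma le. \<exists>c21\<in>lex_gamma le. \<exists>c22\<in>lex_gamma le.
      lex_gamma_add le c11 c12 = Some a1 \<and> lex_gamma_add le c21 c22 = Some a2 \<and>
      lex_gamma_add le c11 c21 = Some b1 \<and> lex_gamma_add le c12 c22 = Some b2 \<and>
      (c12 = 0 \<or> c21 = 0 \<or> (fst c12 = 0 \<and> fst c21 = 0 \<and> Q (snd c12) (snd c21)))"
    using gamma_add_eq_SomeI[OF E(1)] gamma_add_eq_SomeI[OF E(2)]
      gamma_add_eq_SomeI[OF E(3)] gamma_add_eq_SomeI[OF E(4)] by blast
qed

lemma lex_gamma_pea_le_level0:
  assumes x: "x \<in> lex_gamma le" and le_c: "pea_le (lex_gamma le) (lex_gamma_add le) x c"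
    and c: "fst c = 0"
  shows "fst x = 0 \<and> le 0 (snd x) \<and> le (snd x) (snd c)"
proof -
  obtain d where d: "d \<in> lex_gamma le" "x + d = c"
    using le_c by (auto simp: pea_le_def gamma_add_eq_Some_iff)
  then have "fst x = 0" "fst d = 0" "le 0 (snd x)" "le 0 (snd d)" "snd x + snd d = snd c"
    using x c by (auto simp: lex_gamma_iff[of "fst x" "snd x", simplified]
        lex_gamma_iff[of "fst d" "snd d", simplified])
  then show ?thesis
    using po_le_add_nonneg by metis
qed

lemma lex_gamma_pea_le_zero:
  assumes "x \<in> lex_gamma le" "pea_le (lex_gamma le) (lex_gamma_add le) x 0"
  shows "x = 0"
  using lex_gamma_pea_le_level0[OF assms] po_antisym by (simp add: prod_eq_iff)

lemma lex_gamma_commute: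
  assumes c: "c12 = 0 \<or> c21 = 0 \<or>
      (fst c12 = 0 \<and> fst c21 = 0 \<and> intervals_commute le (snd c12) (snd c21))"
    and x: "x \<in> lex_gamma le" "pea_le (lex_gamma le) (lex_gamma_add le) x c12"
    and y: "y \<in> lex_gamma le" "pea_le (lex_gamma le) (lex_gamma_add le) y c21"
  shows "lex_gamma_add le x y \<noteq> None \<and> lex_gamma_add le x y = lex_gamma_add le y x"
proof -
  have unit: "lex_gamma_add le 0 z = Some z" "lex_gamma_add le z 0 = Some z"
    if "z \<in> lex_gamma le" for z
    using that by (auto simp: gamma_add_eq_SomeI)
  consider "c12 = 0" | "c21 = 0"
    | "fst c12 = 0" "fst c21 = 0" "intervals_commute le (snd c12) (snd c21)"
    using c by blast
  then show ?thesis
  proof cases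
    case 1
    then show ?thesis
      using lex_gamma_pea_le_zero[of x] x unit[OF y(1)] by simp
  next
    case 2
    then show ?thesis
      using lex_gamma_pea_le_zero[of y] y unit[OF x(1)] by simp
  next
    case 3
    have "fst x = 0" "fst y = 0" "snd x + snd y = snd y + snd x"
      using lex_gamma_pea_le_level0[OF x 3(1)] lex_gamma_pea_le_level0[OF y 3(2)] 3(3)
      by (auto simp: intervals_commute_def)
    then show ?thesis
      by (simp add: gamma_add_def lex_le_def prod_eq_iff)
  qed
qed

end

theorem proposition3p3:
  fixes le :: "'a::group_add \<Rightarrow> 'a \<Rightarrow> bool"
  assumes "po_group le" and "directed le"
  shows "(RDP_grp le \<longrightarrow>
            RDP_pea (gamma_carrier (lex_le le) (1, 0)) (gamma_add (lex_le le) (1, 0))) \<and>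
         (RDP1_grp le \<longrightarrow>
            RDP1_pea (gamma_carrier (lex_le le) (1, 0)) (gamma_add (lex_le le) (1, 0)))"
proof (intro conjI impI)
  assume "RDP_grp le"
  then have "RDP_with le (\<lambda>_ _. True)"
    by (simp add: RDP_grp_iff_RDP_with)
  from lex_gamma_RDP_pea_with[OF assms this] show "RDP_pea (lex_gamma le) (lex_gamma_add le)"
    unfolding RDP_pea_iff_RDP_pea_with by (rule RDP_pea_with_mono) simp
next
  assume "RDP1_grp le"
  then have "RDP_with le (intervals_commute le)"
    by (simp add: RDP1_grp_iff_RDP_with)
  from lex_gamma_RDP_pea_with[OF assms this] show "RDP1_pea (lex_gamma le) (lex_gamma_add le)"
    unfolding RDP1_pea_iff_RDP_pea_with
    by (rule RDP_pea_with_mono) (use lex_gamma_commute[OF assms(1)] in blast)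
qed

end
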